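(* For integers $s,t\ge0$ let $m_{i,j}^{s,t}=\int_{(0,1)^2}\frac{x^{s+i}y^{s+j}}{x+y}\left(\frac{1-x}{1+x}\right)^t\left(\frac{1-y}{1+y}\right)^tdx\,dy$, $\phi_i^{s,t}=\sqrt2\int_0^1\frac{x^{s+i}}{1+x}\left(\frac{1-x}{1+x}\right)^tdx$, $\tau_n^{s,t}=\det(m_{i,j}^{s,t})_{i,j=0}^{n-1}$, $\xi_n^{s,t}=\det(m_{i,j+1}^{s,t})_{i,j=0}^{n-1}$ (with $\tau_0^{s,t}=\xi_0^{s,t}=1$), and for $n\ge0$ the $(n+1)\times(n+1)$ determinants $$\sigma_n^{s,t}=\det\begin{pmatrix} m_{0,0}^{s,t}&\cdots&m_{0,n-1}^{s,t}&\phi_0^{s,t}\\ \vdots&&\vdots&\vdots\\ m_{n,0}^{s,t}&\cdots&m_{n,n-1}^{s,t}&\phi_n^{s,t}\end{pmatrix},\qquad \psi_n^{s,t}=\det\begin{pmatrix} m_{0,1}^{s,t}&\cdots&m_{0,n}^{s,t}&\phi_0^{s,t}\\ \vdots&&\vdots&\vdots\\ m_{n,1}^{s,t}&\cdots&m_{n,n}^{s,t}&\phi_n^{s,t}\end{pmatrix}.$$ Then for all $n\ge1$ and $s,t\ge0$: $$\tau_{n+1}^{s,t}\tau_{n-1}^{s+1,t}=\tau_n^{s,t}\tau_n^{s+1,t}-(\xi_n^{s,t})^2,$$ $$\tau_n^{s,t+1}\tau_{n-1}^{s,t}=\tau_n^{s,t}\tau_{n-1}^{s,t+1}-(\sigma_{n-1}^{s,t})^2,$$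 $$\tau_n^{s,t+1}\tau_{n-1}^{s+1,t}=\tau_n^{s,t}\tau_{n-1}^{s+1,t+1}-(\psi_{n-1}^{s,t})^2,$$ $$\tau_n^{s,t+1}\xi_{n-1}^{s,t}=\tau_n^{s,t}\xi_{n-1}^{s,t+1}-\psi_{n-1}^{s,t}\sigma_{n-1}^{s,t}.$$
   Context: Empty determinants equal $1$; for $n=0$, $\sigma_0^{s,t}=\psi_0^{s,t}=\phi_0^{s,t}$. *)

theory Defs
  imports "HOL-Analysis.Analysis"
begin

definition detn :: "nat \<Rightarrow> (nat \<Rightarrow> nat \<Rightarrow> real) \<Rightarrow> real" where
  "detn n A = (\<Sum>p | p permutes {..<n}. of_int (sign p) * (\<Prod>i<n. A i (p i)))"

definition mm :: "nat \<Rightarrow> nat \<Rightarrow> nat \<Rightarrow> nat \<Rightarrow> real" where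
  "mm s t i j = (LINT z : {0<..<1} \<times> {0<..<1} | lborel.
      (fst z ^ (s+i) * snd z ^ (s+j) / (fst z + snd z)) *
      ((1 - fst z) / (1 + fst z)) ^ t * ((1 - snd z) / (1 + snd z)) ^ t)"

definition phi :: "nat \<Rightarrow> nat \<Rightarrow> nat \<Rightarrow> real" where
  "phi s t i = sqrt 2 * (LINT x : {0<..<1} | lborel. x ^ (s+i) / (1 + x) * ((1 - x) / (1 + x)) ^ t)"

definition tau :: "nat \<Rightarrow> nat \<Rightarrow> nat \<Rightarrow> real" where
  "tau s t n = detn n (\<lambda>i j. mm s t i j)"

definition xi :: "nat \<Rightarrow> nat \<Rightarrow> nat \<Rightarrow> real" where
  "xi s t n = detn n (\<lambda>i j. mm s t i (j+1))"

definition sigma :: "nat \<Rightarrow> nat \<Rightarrow> nat \<Rightarrow> real" where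
  "sigma s t n = detn (n+1) (\<lambda>i j. if j < n then mm s t i j else phi s t i)"

definition psi :: "nat \<Rightarrow> nat \<Rightarrow> nat \<Rightarrow> real" where
  "psi s t n = detn (n+1) (\<lambda>i j. if j < n then mm s t i (j+1) else phi s t i)"

end

(*
  All four identities are instances of the Desnanot-Jacobi identity for a (k+2) x (k+2) matrix,
  deleting row 0 or row k together with the last row, and likewise for the columns.  The first is
  applied to the moment matrix m^{s,t}; deleting its first row and column shifts s by one.  For
  the other three, m^{s,t} is bordered by the column and row phi^{s,t} and the corner entry 1.
  Since m^{s,t+1} = m^{s,t} - phi^{s,t} (phi^{s,t})^T, the minors containing the border are
  minors of m^{s,t+1}, and the mixed ones are sigma and psi.

  The Desnanot-Jacobi identity itself comes from the Schur complement of the leading block.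
*)
theory Submission
  imports Defs "Jordan_Normal_Form.Char_Poly"
begin

text \<open>\<open>detn\<close> over an arbitrary commutative ring, so that it also applies to polynomial matrices.\<close>
definition det_fun :: "nat \<Rightarrow> (nat \<Rightarrow> nat \<Rightarrow> 'a::comm_ring_1) \<Rightarrow> 'a" where
  "det_fun n A = Determinant.det (Matrix.mat n n (\<lambda>(i,j). A i j))"

lemma detn_eq_det_fun: "detn n A = det_fun n A"
proof -
  have "det_fun n A = (\<Sum>p | p permutes {0..<n}.
      signof p * (\<Prod>i=0..<n. Matrix.mat n n (\<lambda>(i,j). A i j) $$ (i, p i)))"
    unfolding det_fun_def by (rule det_def') simp
  also have "\<dots> = detn n A"
    unfolding detn_def lessThan_atLeast0
  proof (rule sum.cong[OF refl], unfold mem_Collect_eq)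
    fix p assume "p permutes {0..<n}"
    then have "i < n \<Longrightarrow> p i < n" for i using permutes_in_image by fastforce
    then show "signof p * (\<Prod>i=0..<n. Matrix.mat n n (\<lambda>(i,j). A i j) $$ (i, p i)) =
        of_int (sign p) * (\<Prod>i=0..<n. A i (p i))"
      by (auto intro!: prod.cong)
  qed
  finally show ?thesis ..
qed

lemma det_fun_cong:
  assumes "\<And>i j. i < n \<Longrightarrow> j < n \<Longrightarrow> A i j = B i j"
  shows "det_fun n A = det_fun n B"
  unfolding det_fun_def by (rule arg_cong[where f = Determinant.det]) (auto simp: assms)

lemma det_fun_transpose: "det_fun n (\<lambda>i j. A j i) = det_fun n A"
proof -
  have "Matrix.mat n n (\<lambda>(i,j). A j i) = transpose_mat (Matrix.mat n n (\<lambda>(i,j). A i j))"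
    by (rule eq_matI) auto
  then show ?thesis
    unfolding det_fun_def using det_transpose[of "Matrix.mat n n (\<lambda>(i,j). A i j)" n] by simp
qed

lemma det_fun_permute_rows:
  assumes "p permutes {..<n}"
  shows "det_fun n (\<lambda>i j. A (p i) j) = of_int (sign p) * det_fun n A"
proof -
  have p: "p permutes {0..<n}" using assms by (simp add: lessThan_atLeast0)
  then have "i < n \<Longrightarrow> p i < n" for i using permutes_in_image by fastforce
  then have "Matrix.mat n n (\<lambda>(i,j). A (p i) j) =
      Matrix.mat n n (\<lambda>(i,j). Matrix.mat n n (\<lambda>(i,j). A i j) $$ (p i, j))"
    by (intro eq_matI) auto
  then show ?thesis
    unfolding det_fun_def
    using det_permute_rows[OF _ p, of "Matrix.mat n n (\<lambda>(i,j). A i j)"] by simp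
qed

lemma det_fun_permute_cols:
  assumes "p permutes {..<n}"
  shows "det_fun n (\<lambda>i j. A i (p j)) = of_int (sign p) * det_fun n A"
proof -
  have "det_fun n (\<lambda>i j. A i (p j)) = det_fun n (\<lambda>i j. A j (p i))"
    by (rule det_fun_transpose[symmetric])
  also have "\<dots> = of_int (sign p) * det_fun n (\<lambda>i j. A j i)"
    by (rule det_fun_permute_rows[OF assms])
  also have "det_fun n (\<lambda>i j. A j i) = det_fun n A"
    by (rule det_fun_transpose)
  finally show ?thesis .
qed

lemma det_fun_permute_both:
  assumes "p permutes {..<n}" "q permutes {..<n}"
  shows "det_fun n (\<lambda>i j. A (p i) (q j)) = of_int (sign p * sign q) * det_fun n A"
  unfolding det_fun_permute_rows[OF assms(1), of "\<lambda>i j. A i (q j)"] det_fun_permute_cols[OF assms(2)]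
  by simp

lemma det_fun_symmetric_row_col:
  assumes "\<And>i j. A i j = A j i"
  shows "det_fun n (\<lambda>i j. A (f i) j) = det_fun n (\<lambda>i j. A i (f j))"
proof -
  have "det_fun n (\<lambda>i j. A (f i) j) = det_fun n (\<lambda>i j. A (f j) i)"
    by (rule det_fun_transpose[symmetric])
  then show ?thesis
    by (simp add: assms)
qed

lemma det_fun_poly: "det_fun n (\<lambda>i j. poly (A i j) x) = poly (det_fun n A) x"
  unfolding det_fun_def by (rule poly_det_cong[symmetric, of _ n]) auto

lemma det_fun_2: "det_fun 2 A = A 0 0 * A 1 1 - A 0 1 * A 1 0"
proof -
  let ?M = "Matrix.mat 2 2 (\<lambda>(i,j). A i j)"
  have "det_fun 2 A = (\<Sum>i<2. ?M $$ (i,0) * cofactor ?M i 0)"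
    unfolding det_fun_def by (rule laplace_expansion_column) auto
  then show ?thesis
    by (simp add: numeral_2_eq_2 cofactor_def det_single mat_delete_def)
qed

lemma det_fun_Suc_0: "det_fun (Suc 0) A = A 0 0"
  unfolding det_fun_def by (simp add: det_single)

lemma det_four_block_mat_schur:
  fixes A :: "'a::idom mat"
  assumes A: "A \<in> carrier_mat k k" and B: "B \<in> carrier_mat k m"
    and C: "C \<in> carrier_mat m k" and D: "D \<in> carrier_mat m m"
  shows "Determinant.det (four_block_mat A B C D) * Determinant.det A ^ m =
    Determinant.det A * Determinant.det (Determinant.det A \<cdot>\<^sub>m D - C * (adj_mat A * B))"
proof -
  let ?d = "Determinant.det A"
  let ?Q = "four_block_mat (1\<^sub>m k) (- (adj_mat A * B)) (0\<^sub>m m k) (?d \<cdot>\<^sub>m 1\<^sub>m m)"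
  have adj: "adj_mat A \<in> carrier_mat k k" "A * adj_mat A = ?d \<cdot>\<^sub>m 1\<^sub>m k"
    using adj_mat[OF A] by auto
  have aB: "adj_mat A * B \<in> carrier_mat k m" using adj(1) B by simp
  have CaB: "C * (adj_mat A * B) \<in> carrier_mat m m" using C aB by simp
  have "A * (adj_mat A * B) = (A * adj_mat A) * B"
    using A adj(1) B by (simp add: assoc_mult_mat)
  also have "\<dots> = ?d \<cdot>\<^sub>m B" using B by (simp add: adj(2) mult_smult_assoc_mat[OF one_carrier_mat])
  finally have AaB: "A * (adj_mat A * B) = ?d \<cdot>\<^sub>m B" .
  have upper_right: "A * (- (adj_mat A * B)) + B * (?d \<cdot>\<^sub>m 1\<^sub>m m) = 0\<^sub>m k m"
  proof -
    have "A * (- (adj_mat A * B)) = - (?d \<cdot>\<^sub>m B)"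
      unfolding AaB[symmetric] by (rule uminus_mult_right_mat) (use A aB in auto)
    moreover have "B * (?d \<cdot>\<^sub>m 1\<^sub>m m) = ?d \<cdot>\<^sub>m B"
      using B by (simp add: mult_smult_distrib[OF B one_carrier_mat])
    ultimately show ?thesis using B by (simp add: uminus_l_inv_mat)
  qed
  have lower_right: "C * (- (adj_mat A * B)) + D * (?d \<cdot>\<^sub>m 1\<^sub>m m) = ?d \<cdot>\<^sub>m D - C * (adj_mat A * B)"
  proof -
    have "C * (- (adj_mat A * B)) = - (C * (adj_mat A * B))"
      by (rule uminus_mult_right_mat) (use C aB in auto)
    moreover have "D * (?d \<cdot>\<^sub>m 1\<^sub>m m) = ?d \<cdot>\<^sub>m D"
      using D by (simp add: mult_smult_distrib[OF D one_carrier_mat])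
    ultimately show ?thesis
      using minus_add_uminus_mat[OF smult_carrier_mat[OF D] CaB]
        comm_add_mat[OF uminus_carrier_mat[OF CaB] smult_carrier_mat[OF D]] by simp
  qed
  have "four_block_mat A B C D * ?Q = four_block_mat A (0\<^sub>m k m) C (?d \<cdot>\<^sub>m D - C * (adj_mat A * B))"
    using A B C D
    by (simp add: mult_four_block_mat[OF A B C D one_carrier_mat uminus_carrier_mat[OF aB]
          zero_carrier_mat smult_carrier_mat[OF one_carrier_mat]] upper_right lower_right)
  then have "Determinant.det (four_block_mat A B C D) * Determinant.det ?Q =
      Determinant.det (four_block_mat A (0\<^sub>m k m) C (?d \<cdot>\<^sub>m D - C * (adj_mat A * B)))"
    using A B C D aB by (simp add: det_mult[symmetric, of _ "k + m"])
  also have "\<dots> = ?d * Determinant.det (?d \<cdot>\<^sub>m D - C * (adj_mat A * B))"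
    by (rule det_four_block_mat_upper_right_zero[OF A refl C minus_carrier_mat[OF CaB]])
  finally have "Determinant.det (four_block_mat A B C D) * Determinant.det ?Q =
      ?d * Determinant.det (?d \<cdot>\<^sub>m D - C * (adj_mat A * B))" .
  moreover have "Determinant.det ?Q = ?d ^ m"
    using aB by (simp add: det_four_block_mat_lower_left_zero[of _ k _ m])
  ultimately show ?thesis by simp
qed

section \<open>The Desnanot-Jacobi identity\<close>

text \<open>The determinant of the leading \<open>k \<times> k\<close> block times the entry \<open>(x, y)\<close> of its Schur
  complement; the adjugate avoids division.\<close>
definition schur_entry :: "nat \<Rightarrow> (nat \<Rightarrow> nat \<Rightarrow> 'a::comm_ring_1) \<Rightarrow> nat \<Rightarrow> nat \<Rightarrow> 'a" where
  "schur_entry k G x y = det_fun k G * G x y -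
    (\<Sum>l<k. \<Sum>l'<k. G x l * adj_mat (Matrix.mat k k (\<lambda>(i,j). G i j)) $$ (l, l') * G l' y)"

lemma det_fun_schur:
  fixes G :: "nat \<Rightarrow> nat \<Rightarrow> 'a::idom"
  shows "det_fun (k + m) G * det_fun k G ^ m =
    det_fun k G * det_fun m (\<lambda>i j. schur_entry k G (k + i) (k + j))"
proof -
  define L where "L = Matrix.mat k k (\<lambda>(i,j). G i j)"
  define B where "B = Matrix.mat k m (\<lambda>(i,j). G i (k + j))"
  define C where "C = Matrix.mat m k (\<lambda>(i,j). G (k + i) j)"
  define D where "D = Matrix.mat m m (\<lambda>(i,j). G (k + i) (k + j))"
  have carrier: "L \<in> carrier_mat k k" "B \<in> carrier_mat k m" "C \<in> carrier_mat m k"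
    "D \<in> carrier_mat m m" "adj_mat L \<in> carrier_mat k k"
    by (auto simp: L_def B_def C_def D_def adj_mat)
  have blocks: "Matrix.mat (k + m) (k + m) (\<lambda>(i,j). G i j) = four_block_mat L B C D"
    by (rule eq_matI) (auto simp: L_def B_def C_def D_def)
  have "det_fun k G \<cdot>\<^sub>m D - C * (adj_mat L * B) =
      Matrix.mat m m (\<lambda>(i,j). schur_entry k G (k + i) (k + j))"
    using carrier
    by (intro eq_matI)
      (auto simp: schur_entry_def D_def C_def B_def L_def scalar_prod_def sum_distrib_left
        lessThan_atLeast0 mult.assoc intro!: sum.cong)
  moreover have "det_fun k G = Determinant.det L" unfolding L_def det_fun_def ..
  ultimately show ?thesis
    using det_four_block_mat_schur[OF carrier(1-4)] by (simp add: det_fun_def blocks)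
qed

lemma det_fun_bordered_eq_schur_entry:
  fixes G :: "nat \<Rightarrow> nat \<Rightarrow> 'a::idom"
  assumes "det_fun k G \<noteq> 0" and "\<And>i. i < k \<Longrightarrow> f i = i" and "\<And>j. j < k \<Longrightarrow> g j = j"
  shows "det_fun (Suc k) (\<lambda>i j. G (f i) (g j)) = schur_entry k G (f k) (g k)"
proof -
  let ?G' = "\<lambda>i j. G (f i) (g j)"
  have lead: "Matrix.mat k k (\<lambda>(i,j). ?G' i j) = Matrix.mat k k (\<lambda>(i,j). G i j)"
    by (rule eq_matI) (auto simp: assms(2,3))
  then have "det_fun k ?G' = det_fun k G" unfolding det_fun_def by simp
  moreover have "schur_entry k ?G' k k = schur_entry k G (f k) (g k)"
    unfolding schur_entry_def \<open>det_fun k ?G' = det_fun k G\<close> lead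
    by (auto simp: assms(2,3) intro!: sum.cong)
  ultimately show ?thesis
    using det_fun_schur[of k 1 ?G'] assms(1) by (simp add: det_fun_Suc_0)
qed

text \<open>\<open>skip p\<close> enumerates \<open>\<nat> - {p}\<close> increasingly, so \<open>\<lambda>i j. A (skip p i) (skip q j)\<close> deletes
  row \<open>p\<close> and column \<open>q\<close> of \<open>A\<close>.\<close>
definition skip :: "nat \<Rightarrow> nat \<Rightarrow> nat" where
  "skip p i = (if i < p then i else Suc i)"

lemma skip_0: "skip 0 = Suc"
  by (simp add: skip_def fun_eq_iff)

lemma skip_less [simp]: "i < p \<Longrightarrow> skip p i = i"
  by (simp add: skip_def)

lemma skip_self [simp]: "skip p p = Suc p"
  by (simp add: skip_def)

lemma desnanot_jacobi_nonsingular: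
  fixes G :: "nat \<Rightarrow> nat \<Rightarrow> 'a::idom"
  assumes "det_fun k G \<noteq> 0"
  shows "det_fun (Suc (Suc k)) G * det_fun k G =
    det_fun (Suc k) G * det_fun (Suc k) (\<lambda>i j. G (skip k i) (skip k j)) -
    det_fun (Suc k) (\<lambda>i j. G (skip k i) j) * det_fun (Suc k) (\<lambda>i j. G i (skip k j))"
proof -
  let ?S = "schur_entry k G"
  have minor: "det_fun (k + 1) (\<lambda>i j. G (f i) (g j)) = ?S (f k) (g k)"
    if "f \<in> {\<lambda>i. i, skip k}" "g \<in> {\<lambda>i. i, skip k}" for f g
    using det_fun_bordered_eq_schur_entry[OF assms, of f g] that by auto
  have "det_fun (k + 2) G * det_fun k G ^ 2 =
      det_fun k G * (?S k k * ?S (k + 1) (k + 1) - ?S k (k + 1) * ?S (k + 1) k)"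
    using det_fun_schur[of k 2 G] by (simp add: det_fun_2)
  then have "det_fun (k + 2) G * det_fun k G =
      ?S k k * ?S (k + 1) (k + 1) - ?S k (k + 1) * ?S (k + 1) k"
    using assms by (simp add: power2_eq_square mult.assoc)
  with minor[of "\<lambda>i. i" "\<lambda>i. i"] minor[of "skip k" "skip k"]
    minor[of "skip k" "\<lambda>i. i"] minor[of "\<lambda>i. i" "skip k"]
  show ?thesis by (simp add: mult.commute)
qed

text \<open>Perturbing the leading block by the indeterminate \<open>X\<close> makes its determinant a monic
  characteristic polynomial, hence nonzero; evaluating at \<open>X = 0\<close> recovers \<open>A\<close>.\<close>
lemma desnanot_jacobi_last:
  fixes A :: "nat \<Rightarrow> nat \<Rightarrow> 'a::idom"
  shows "det_fun (Suc (Suc k)) A * det_fun k A =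
    det_fun (Suc k) A * det_fun (Suc k) (\<lambda>i j. A (skip k i) (skip k j)) -
    det_fun (Suc k) (\<lambda>i j. A (skip k i) j) * det_fun (Suc k) (\<lambda>i j. A i (skip k j))"
proof -
  define G where "G i j = [:A i j:] + (if i = j \<and> i < k then [:0, 1:] else 0)" for i j
  define L where "L = Matrix.mat k k (\<lambda>(i,j). - A i j)"
  have "det_fun k G = char_poly L"
    unfolding det_fun_def char_poly_def char_poly_matrix_def
    by (rule arg_cong[where f = Determinant.det], rule eq_matI) (auto simp: G_def L_def)
  moreover have "char_poly L \<noteq> 0"
    using degree_monic_char_poly[of L k] by (auto simp: L_def)
  ultimately have "det_fun k G \<noteq> 0" by simp
  from desnanot_jacobi_nonsingular[OF this]
  have "poly (det_fun (Suc (Suc k)) G * det_fun k G) 0 =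
    poly (det_fun (Suc k) G * det_fun (Suc k) (\<lambda>i j. G (skip k i) (skip k j)) -
      det_fun (Suc k) (\<lambda>i j. G (skip k i) j) * det_fun (Suc k) (\<lambda>i j. G i (skip k j))) 0"
    by simp
  moreover have "poly (G i j) 0 = A i j" for i j by (simp add: G_def)
  ultimately show ?thesis
    by (simp only: poly_mult poly_diff det_fun_poly[symmetric])
qed

text \<open>The cyclic permutation moving position \<open>k\<close> to \<open>p \<le> k\<close>; it reduces deletions at
  \<open>p\<close> to deletions at \<open>k\<close>, and its sign cancels in the Desnanot-Jacobi identity.\<close>
definition move_index :: "nat \<Rightarrow> nat \<Rightarrow> nat \<Rightarrow> nat" where
  "move_index k p i = (if i = k then p else if p \<le> i \<and> i < k then Suc i else i)"

lemma move_index_permutes: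
  assumes "p \<le> k" "k < m"
  shows "move_index k p permutes {..<m}"
proof -
  have inj: "inj_on (move_index k p) {..<m}"
    using assms by (auto simp: inj_on_def move_index_def split: if_splits)
  moreover have "move_index k p ` {..<m} \<subseteq> {..<m}"
    using assms by (auto simp: move_index_def)
  ultimately have "move_index k p ` {..<m} = {..<m}"
    by (intro endo_inj_surj) auto
  with inj have "bij_betw (move_index k p) {..<m} {..<m}"
    by (simp add: bij_betw_def)
  moreover have "move_index k p i = i" if "i \<notin> {..<m}" for i
    using assms that by (simp add: move_index_def)
  ultimately show ?thesis
    by (rule bij_imp_permutes)
qed

lemma move_index_skip:
  "p \<le> k \<Longrightarrow> i \<le> k \<Longrightarrow> move_index k p (skip k i) = skip p i"
  by (auto simp: move_index_def skip_def)

lemma desnanot_jacobi: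
  fixes A :: "nat \<Rightarrow> nat \<Rightarrow> 'a::idom"
  assumes "p \<le> k" "q \<le> k"
  shows "det_fun (Suc (Suc k)) A * det_fun k (\<lambda>i j. A (skip p i) (skip q j)) =
    det_fun (Suc k) A * det_fun (Suc k) (\<lambda>i j. A (skip p i) (skip q j)) -
    det_fun (Suc k) (\<lambda>i j. A (skip p i) j) * det_fun (Suc k) (\<lambda>i j. A i (skip q j))"
proof -
  let ?\<pi> = "move_index k p" and ?\<sigma> = "move_index k q"
  let ?F = "\<lambda>i j. A (?\<pi> i) (?\<sigma> j)"
  let ?e = "of_int (sign ?\<pi> * sign ?\<sigma>) :: 'a"
  have perm: "?\<pi> permutes {..<m}" "?\<sigma> permutes {..<m}" if "k < m" for m
    using assms that by (auto intro: move_index_permutes)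
  note perm1 = perm[of "Suc k", simplified] and perm2 = perm[of "Suc (Suc k)", simplified]
  have \<pi>: "?\<pi> (skip k i) = skip p i" and \<sigma>: "?\<sigma> (skip k i) = skip q i" if "i \<le> k" for i
    using assms that by (auto intro: move_index_skip)
  have \<pi>\<sigma>_less: "?\<pi> i = skip p i" "?\<sigma> i = skip q i" if "i < k" for i
    using \<pi>[of i] \<sigma>[of i] that by simp_all
  have "det_fun (Suc (Suc k)) ?F = ?e * det_fun (Suc (Suc k)) A" "det_fun (Suc k) ?F = ?e * det_fun (Suc k) A"
    using det_fun_permute_both[OF perm2] det_fun_permute_both[OF perm1] by simp_all
  moreover have "det_fun k ?F = det_fun k (\<lambda>i j. A (skip p i) (skip q j))"
    by (rule det_fun_cong) (simp add: \<pi>\<sigma>_less)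
  moreover have "det_fun (Suc k) (\<lambda>i j. ?F (skip k i) (skip k j)) =
      det_fun (Suc k) (\<lambda>i j. A (skip p i) (skip q j))"
    by (rule det_fun_cong) (simp add: \<pi> \<sigma>)
  moreover have "det_fun (Suc k) (\<lambda>i j. ?F (skip k i) j) =
      of_int (sign ?\<sigma>) * det_fun (Suc k) (\<lambda>i j. A (skip p i) j)"
  proof -
    have "det_fun (Suc k) (\<lambda>i j. ?F (skip k i) j) = det_fun (Suc k) (\<lambda>i j. A (skip p i) (?\<sigma> j))"
      by (rule det_fun_cong) (simp add: \<pi>)
    then show ?thesis using det_fun_permute_cols[OF perm1(2)] by simp
  qed
  moreover have "det_fun (Suc k) (\<lambda>i j. ?F i (skip k j)) =
      of_int (sign ?\<pi>) * det_fun (Suc k) (\<lambda>i j. A i (skip q j))"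
  proof -
    have "det_fun (Suc k) (\<lambda>i j. ?F i (skip k j)) = det_fun (Suc k) (\<lambda>i j. A (?\<pi> i) (skip q j))"
      by (rule det_fun_cong) (simp add: \<sigma>)
    then show ?thesis using det_fun_permute_rows[OF perm1(1)] by simp
  qed
  ultimately have "?e * (det_fun (Suc (Suc k)) A * det_fun k (\<lambda>i j. A (skip p i) (skip q j))) =
      ?e * (det_fun (Suc k) A * det_fun (Suc k) (\<lambda>i j. A (skip p i) (skip q j)) -
        det_fun (Suc k) (\<lambda>i j. A (skip p i) j) * det_fun (Suc k) (\<lambda>i j. A i (skip q j)))"
    using desnanot_jacobi_last[of k ?F] by (simp add: algebra_simps)
  moreover have "?e \<noteq> 0"
    by (simp add: sign_def)
  ultimately show ?thesis by simp
qed

section \<open>Bordered determinants\<close>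

definition border :: "nat \<Rightarrow> (nat \<Rightarrow> nat \<Rightarrow> 'a) \<Rightarrow> (nat \<Rightarrow> 'a) \<Rightarrow> (nat \<Rightarrow> 'a) \<Rightarrow> nat \<Rightarrow> nat \<Rightarrow> 'a::one"
  where "border n A u v i j = (if i < n then if j < n then A i j else u i else if j < n then v j else 1)"

lemma det_fun_border:
  fixes A :: "nat \<Rightarrow> nat \<Rightarrow> 'a::idom"
  shows "det_fun (Suc n) (border n A u v) = det_fun n (\<lambda>i j. A i j - u i * v j)"
proof -
  define L where "L = Matrix.mat n n (\<lambda>(i,j). A i j)"
  define b where "b = Matrix.mat n 1 (\<lambda>(i,j). u i)"
  define c where "c = Matrix.mat 1 n (\<lambda>(i,j). v j)"
  have carrier: "L \<in> carrier_mat n n" "b \<in> carrier_mat n 1" "c \<in> carrier_mat 1 n" "- c \<in> carrier_mat 1 n"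
    by (auto simp: L_def b_def c_def)
  let ?M = "four_block_mat L b c (1\<^sub>m 1)"
  let ?R = "four_block_mat (1\<^sub>m n) (0\<^sub>m n 1) (- c) (1\<^sub>m 1)"
  let ?X = "Matrix.mat n n (\<lambda>(i,j). A i j - u i * v j)"
  have M: "?M \<in> carrier_mat (n + 1) (n + 1)" and R: "?R \<in> carrier_mat (n + 1) (n + 1)"
    using carrier by (auto intro: four_block_carrier_mat)
  have "det_fun (Suc n) (border n A u v) = Determinant.det ?M"
    unfolding det_fun_def
    by (rule arg_cong[where f = Determinant.det], rule eq_matI)
      (auto simp: border_def L_def b_def c_def less_Suc_eq)
  also have "\<dots> = Determinant.det (?M * ?R)"
    using det_mult[OF M R] det_four_block_mat_upper_right_zero[OF one_carrier_mat refl carrier(4)]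
    by simp
  \<comment> \<open>Subtracting multiples of the last column clears the bottom row.\<close>
  also have "?M * ?R = four_block_mat ?X b (0\<^sub>m 1 n) (1\<^sub>m 1)"
    using carrier
    by (subst mult_four_block_mat[OF carrier(1-3) one_carrier_mat one_carrier_mat zero_carrier_mat
          carrier(4) one_carrier_mat])
      (auto intro!: cong_four_block_mat eq_matI simp: L_def b_def c_def scalar_prod_def)
  also have "Determinant.det \<dots> = det_fun n (\<lambda>i j. A i j - u i * v j)"
    unfolding det_fun_def
    using det_four_block_mat_lower_left_zero[of ?X n b 1 "0\<^sub>m 1 n" "1\<^sub>m 1"] carrier by simp
  finally show ?thesis .
qed

lemma border_skip:
  assumes "p \<le> k" "q \<le> k"
  shows "border (Suc k) A u v (skip p i) (skip q j) =
    border k (\<lambda>i j. A (skip p i) (skip q j)) (\<lambda>i. u (skip p i)) (\<lambda>j. v (skip q j)) i j"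
  using assms by (auto simp: border_def skip_def)

section \<open>The moment integrals\<close>

lemma set_integral_product:
  fixes g h :: "real \<Rightarrow> real"
  assumes g: "set_integrable lborel A g" and h: "set_integrable lborel B h"
  shows "set_integrable lborel (A \<times> B) (\<lambda>z. g (fst z) * h (snd z))"
    and "(LINT z:A \<times> B|lborel. g (fst z) * h (snd z)) = (LINT x:A|lborel. g x) * (LINT y:B|lborel. h y)"
proof -
  define G where "G = (\<lambda>x. indicator A x * g x)"
  define H where "H = (\<lambda>y. indicator B y * h y)"
  have G: "integrable lborel G" and H: "integrable lborel H"
    using g h by (simp_all add: set_integrable_def G_def H_def)
  have [measurable]: "G \<in> borel_measurable lborel" "H \<in> borel_measurable lborel"
    using G H by (simp_all add: borel_measurable_integrable)
  have indicator_eq: "(\<lambda>z. indicator (A \<times> B) z *\<^sub>R (g (fst z) * h (snd z))) = (\<lambda>z. G (fst z) * H (snd z))"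
    by (auto simp: fun_eq_iff G_def H_def indicator_times split: split_indicator)
  have GH: "integrable (lborel \<Otimes>\<^sub>M lborel) (\<lambda>z. G (fst z) * H (snd z))"
  proof (rule lborel_pair.Fubini_integrable)
    show "integrable lborel (\<lambda>x. LINT y|lborel. norm (G (fst (x, y)) * H (snd (x, y))))"
      using G by (simp add: abs_mult)
    show "AE x in lborel. integrable lborel (\<lambda>y. G (fst (x, y)) * H (snd (x, y)))"
      using H by simp
  qed measurable
  then show "set_integrable lborel (A \<times> B) (\<lambda>z. g (fst z) * h (snd z))"
    unfolding set_integrable_def indicator_eq lborel_prod[symmetric] .
  have "(LINT z:A \<times> B|lborel. g (fst z) * h (snd z)) =
      (LINT x|lborel. LINT y|lborel. G (fst (x, y)) * H (snd (x, y)))"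
    unfolding set_lebesgue_integral_def indicator_eq lborel_prod[symmetric]
    by (rule lborel_pair.integral_fst'[OF GH, symmetric])
  also have "\<dots> = (LINT x|lborel. G x) * (LINT y|lborel. H y)"
    by simp
  finally show "(LINT z:A \<times> B|lborel. g (fst z) * h (snd z)) = (LINT x:A|lborel. g x) * (LINT y:B|lborel. h y)"
    by (simp add: set_lebesgue_integral_def G_def H_def)
qed

lemma set_integrable_inverse_sqrt: "set_integrable lborel {0<..<1::real} (\<lambda>x. 1 / sqrt x)"
proof -
  have "(\<lambda>x::real. x powr (-1/2)) integrable_on {0<..1}"
    by (rule integrable_on_powr_from_0') simp_all
  then have "(\<lambda>x::real. x powr (-1/2)) absolutely_integrable_on {0<..1}"
    by (rule nonnegative_absolutely_integrable_1) simp
  then have "set_integrable lborel {0<..1::real} (\<lambda>x. x powr (-1/2))"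
    unfolding set_integrable_def by (subst (asm) integrable_completion) measurable
  then have "set_integrable lborel {0<..<1::real} (\<lambda>x. x powr (-1/2))"
    by (rule set_integrable_subset) auto
  then show ?thesis
  proof (rule set_integrable_bound)
    show "AE x\<in>{0<..<1} in lborel. norm (1 / sqrt x) \<le> norm (x powr (- 1 / 2))"
      by (intro AE_I2) (simp add: powr_minus_divide powr_half_sqrt)
  qed (simp add: set_borel_measurable_def)
qed

definition mm_integrand :: "nat \<Rightarrow> nat \<Rightarrow> nat \<Rightarrow> nat \<Rightarrow> real \<times> real \<Rightarrow> real" where
  "mm_integrand s t i j z = (fst z ^ (s+i) * snd z ^ (s+j) / (fst z + snd z)) *
    ((1 - fst z) / (1 + fst z)) ^ t * ((1 - snd z) / (1 + snd z)) ^ t"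

definition phi_integrand :: "nat \<Rightarrow> nat \<Rightarrow> nat \<Rightarrow> real \<Rightarrow> real" where
  "phi_integrand s t i x = x ^ (s+i) / (1 + x) * ((1 - x) / (1 + x)) ^ t"

lemma mm_eq_integral: "mm s t i j = (LINT z:{0<..<1} \<times> {0<..<1}|lborel. mm_integrand s t i j z)"
  by (simp add: mm_def mm_integrand_def)

lemma phi_eq_integral: "phi s t i = sqrt 2 * (LINT x:{0<..<1}|lborel. phi_integrand s t i x)"
  by (simp add: phi_def phi_integrand_def)

lemma mm_integrand_measurable [measurable]: "mm_integrand s t i j \<in> borel_measurable (lborel \<Otimes>\<^sub>M lborel)"
  unfolding mm_integrand_def by measurable

lemma set_integrable_phi_integrand: "set_integrable lborel {0<..<1} (phi_integrand s t i)"
proof -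
  have "continuous_on {0..1} (phi_integrand s t i)"
    unfolding phi_integrand_def by (intro continuous_intros) auto
  then have "set_integrable lborel {0..1} (phi_integrand s t i)"
    by (rule borel_integrable_atLeastAtMost')
  then show ?thesis
    by (rule set_integrable_subset) auto
qed

lemma cayley_bounds:
  fixes x :: real
  assumes "0 < x" "x < 1"
  shows "0 \<le> ((1 - x) / (1 + x)) ^ t" "((1 - x) / (1 + x)) ^ t \<le> 1"
  using assms by (simp_all add: power_le_one)

lemma set_integrable_mm_integrand:
  "set_integrable lborel ({0<..<1} \<times> {0<..<1}) (mm_integrand s t i j)"
proof (rule set_integrable_bound)
  show "set_integrable lborel ({0<..<1} \<times> {0<..<1}) (\<lambda>z. 1 / sqrt (fst z) * (1 / sqrt (snd z)))"
    by (intro set_integral_product set_integrable_inverse_sqrt)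
  show "set_borel_measurable lborel ({0<..<1} \<times> {0<..<1}) (mm_integrand s t i j)"
    unfolding set_borel_measurable_def lborel_prod[symmetric] by measurable
  show "AE z\<in>{0<..<1} \<times> {0<..<1} in lborel.
      norm (mm_integrand s t i j z) \<le> norm (1 / sqrt (fst z) * (1 / sqrt (snd z)))"
  proof (intro AE_I2 impI)
    fix z :: "real \<times> real"
    assume "z \<in> {0<..<1} \<times> {0<..<1}"
    then obtain x y where z: "z = (x, y)" and x: "0 < x" "x < 1" and y: "0 < y" "y < 1"
      by (cases z) auto
    define N where "N = x ^ (s+i) * y ^ (s+j) * ((1 - x) / (1 + x)) ^ t * ((1 - y) / (1 + y)) ^ t"
    have "0 \<le> N" "N \<le> 1"
      unfolding N_def using x y cayley_bounds[OF x] cayley_bounds[OF y]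
      by (auto intro!: mult_le_one power_le_one)
    have "N / (x + y) \<le> 1 / (x + y)"
      using \<open>N \<le> 1\<close> x y by (simp add: divide_right_mono)
    also have "\<dots> \<le> 1 / (sqrt x * sqrt y)"
      using arith_geo_mean_sqrt[of x y] x y by (intro divide_left_mono) (auto simp: real_sqrt_mult)
    finally have "N / (x + y) \<le> 1 / sqrt x * (1 / sqrt y)" by simp
    moreover have "mm_integrand s t i j z = N / (x + y)"
      by (simp add: mm_integrand_def z N_def)
    ultimately show "norm (mm_integrand s t i j z) \<le> norm (1 / sqrt (fst z) * (1 / sqrt (snd z)))"
      using \<open>0 \<le> N\<close> x y z by simp
  qed
qed

lemma set_integral_swap:
  fixes F :: "real \<times> real \<Rightarrow> real"
  assumes [measurable]: "F \<in> borel_measurable (lborel \<Otimes>\<^sub>M lborel)" "A \<in> sets borel"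
  shows "(LINT z:A \<times> A|lborel. F (snd z, fst z)) = (LINT z:A \<times> A|lborel. F z)"
proof -
  define H where "H = (\<lambda>z. indicator (A \<times> A) z *\<^sub>R F z)"
  have [measurable]: "H \<in> borel_measurable (lborel \<Otimes>\<^sub>M lborel)"
    unfolding H_def by measurable
  have "(LINT z:A \<times> A|lborel. F (snd z, fst z)) = integral\<^sup>L (lborel \<Otimes>\<^sub>M lborel) (\<lambda>(x, y). H (y, x))"
    unfolding set_lebesgue_integral_def lborel_prod H_def
    by (rule arg_cong[where f = "integral\<^sup>L lborel"]) (auto simp: fun_eq_iff indicator_def)
  also have "\<dots> = integral\<^sup>L (lborel \<Otimes>\<^sub>M lborel) H"
    by (rule lborel_pair.integral_product_swap) measurable
  finally show ?thesis
    unfolding set_lebesgue_integral_def lborel_prod H_def .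
qed

lemma mm_sym: "mm s t i j = mm s t j i"
proof -
  have "mm_integrand s t i j = (\<lambda>z. mm_integrand s t j i (snd z, fst z))"
    by (simp add: fun_eq_iff mm_integrand_def ac_simps)
  then show ?thesis
    unfolding mm_eq_integral by (simp add: set_integral_swap)
qed

lemma mm_Suc_s: "mm (Suc s) t i j = mm s t (Suc i) (Suc j)"
  by (simp add: mm_def)

text \<open>The key identity \<open>(1-x)(1-y)/((1+x)(1+y)) = 1 - 2(x+y)/((1+x)(1+y))\<close>: the factor
  \<open>x + y\<close> cancels the denominator of the kernel, so the correction term factorizes.\<close>
lemma mm_integrand_Suc_t:
  assumes "0 < x" "0 < y"
  shows "mm_integrand s (Suc t) i j (x, y) =
    mm_integrand s t i j (x, y) - 2 * (phi_integrand s t i x * phi_integrand s t j y)"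
proof -
  define a where "a = x ^ (s+i) * ((1 - x) / (1 + x)) ^ t"
  define b where "b = y ^ (s+j) * ((1 - y) / (1 + y)) ^ t"
  have "mm_integrand s (Suc t) i j (x, y) = a * b / (x + y) * ((1 - x) / (1 + x) * ((1 - y) / (1 + y)))"
    by (simp add: mm_integrand_def a_def b_def ac_simps)
  also have "\<dots> = a * b / (x + y) - 2 * (a / (1 + x)) * (b / (1 + y))"
    using assms by (simp add: divide_simps) (simp add: algebra_simps)
  also have "\<dots> = mm_integrand s t i j (x, y) - 2 * (phi_integrand s t i x * phi_integrand s t j y)"
    by (simp add: mm_integrand_def phi_integrand_def a_def b_def ac_simps)
  finally show ?thesis .
qed

lemma mm_Suc_t: "mm s (Suc t) i j = mm s t i j - phi s t i * phi s t j"
proof -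
  let ?Q = "{0<..<1::real} \<times> {0<..<1::real}"
  have Q: "?Q \<in> sets borel"
    by (intro borel_open open_Times open_greaterThanLessThan)
  have phi_prod: "set_integrable lborel ?Q (\<lambda>z. phi_integrand s t i (fst z) * phi_integrand s t j (snd z))"
    "(LINT z:?Q|lborel. phi_integrand s t i (fst z) * phi_integrand s t j (snd z)) =
      (LINT x:{0<..<1}|lborel. phi_integrand s t i x) * (LINT y:{0<..<1}|lborel. phi_integrand s t j y)"
    by (intro set_integral_product set_integrable_phi_integrand)+
  have "mm s (Suc t) i j =
      (LINT z:?Q|lborel. mm_integrand s t i j z - 2 * (phi_integrand s t i (fst z) * phi_integrand s t j (snd z)))"
    unfolding mm_eq_integral
    by (rule set_lebesgue_integral_cong) (auto simp: Q mm_integrand_Suc_t)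
  also have "\<dots> = mm s t i j - 2 * (LINT z:?Q|lborel. phi_integrand s t i (fst z) * phi_integrand s t j (snd z))"
    unfolding mm_eq_integral
    by (simp add: set_integral_diff set_integral_mult_right set_integrable_mm_integrand phi_prod(1))
  also have "\<dots> = mm s t i j - phi s t i * phi s t j"
    by (simp add: phi_prod(2) phi_eq_integral algebra_simps)
  finally show ?thesis .
qed

section \<open>Minors of the moment matrices\<close>

lemma det_fun_mm: "det_fun n (mm s t) = tau s t n"
  by (simp add: tau_def detn_eq_det_fun)

lemma det_fun_mm_Suc_Suc: "det_fun n (\<lambda>i j. mm s t (Suc i) (Suc j)) = tau (Suc s) t n"
  by (simp add: tau_def detn_eq_det_fun mm_Suc_s)

lemma det_fun_mm_Suc_col: "det_fun n (\<lambda>i j. mm s t i (Suc j)) = xi s t n"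
  by (simp add: xi_def detn_eq_det_fun)

lemma det_fun_mm_Suc_row: "det_fun n (\<lambda>i j. mm s t (Suc i) j) = xi s t n"
  using det_fun_symmetric_row_col[where A = "mm s t", OF mm_sym] by (simp add: det_fun_mm_Suc_col)

lemma det_fun_mm_skip_last: "det_fun n (\<lambda>i j. mm s t (f i) (skip n j)) = det_fun n (\<lambda>i j. mm s t (f i) j)"
  by (rule det_fun_cong) simp

lemma det_fun_mm_skip_skip_last: "det_fun n (\<lambda>i j. mm s t (skip n i) (skip n j)) = tau s t n"
  by (simp add: det_fun_cong[of n _ "mm s t"] det_fun_mm)

lemma tau_xi_identity:
  "tau s t (Suc (Suc k)) * tau (Suc s) t k = tau s t (Suc k) * tau (Suc s) t (Suc k) - (xi s t (Suc k))^2"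
  using desnanot_jacobi[of 0 k 0 "mm s t"]
  by (simp add: skip_0 det_fun_mm det_fun_mm_Suc_Suc det_fun_mm_Suc_col det_fun_mm_Suc_row power2_eq_square)

abbreviation moment_border :: "nat \<Rightarrow> nat \<Rightarrow> nat \<Rightarrow> nat \<Rightarrow> nat \<Rightarrow> real" where
  "moment_border s t n \<equiv> border n (mm s t) (phi s t) (phi s t)"

lemma moment_border_sym: "moment_border s t n i j = moment_border s t n j i"
  by (simp add: border_def mm_sym)

lemma det_fun_moment_border: "det_fun (Suc n) (moment_border s t n) = tau s (Suc t) n"
proof -
  have "det_fun (Suc n) (moment_border s t n) = det_fun n (\<lambda>i j. mm s (Suc t) i j)"
    by (simp add: det_fun_border mm_Suc_t)
  then show ?thesis
    by (simp add: det_fun_mm)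
qed

lemma det_fun_moment_border_skip:
  assumes "p \<le> k" "q \<le> k"
  shows "det_fun (Suc k) (\<lambda>i j. moment_border s t (Suc k) (skip p i) (skip q j)) =
    det_fun k (\<lambda>i j. mm s (Suc t) (skip p i) (skip q j))"
  using assms by (simp add: border_skip det_fun_border mm_Suc_t)

lemma det_fun_moment_border_lead: "det_fun n (moment_border s t n) = tau s t n"
  by (simp add: det_fun_cong[of n _ "mm s t"] border_def det_fun_mm)

lemma det_fun_moment_border_skip_lead:
  assumes "p \<le> k" "q \<le> k"
  shows "det_fun k (\<lambda>i j. moment_border s t (Suc k) (skip p i) (skip q j)) =
    det_fun k (\<lambda>i j. mm s t (skip p i) (skip q j))"
  using assms by (intro det_fun_cong) (simp add: border_def skip_def)

lemma det_fun_moment_border_skip_col: "det_fun (Suc k) (\<lambda>i j. moment_border s t (Suc k) i (skip k j)) = sigma s t k"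
  unfolding sigma_def detn_eq_det_fun Suc_eq_plus1
  by (rule det_fun_cong) (auto simp: border_def skip_def)

lemma det_fun_moment_border_skip_row: "det_fun (Suc k) (\<lambda>i j. moment_border s t (Suc k) (skip k i) j) = sigma s t k"
  using det_fun_symmetric_row_col[where A = "moment_border s t (Suc k)", OF moment_border_sym]
  by (simp add: det_fun_moment_border_skip_col)

lemma det_fun_moment_border_Suc_col: "det_fun (Suc k) (\<lambda>i j. moment_border s t (Suc k) i (Suc j)) = psi s t k"
  unfolding psi_def detn_eq_det_fun Suc_eq_plus1
  by (rule det_fun_cong) (auto simp: border_def)

lemma det_fun_moment_border_Suc_row: "det_fun (Suc k) (\<lambda>i j. moment_border s t (Suc k) (Suc i) j) = psi s t k"
  using det_fun_symmetric_row_col[where A = "moment_border s t (Suc k)", OF moment_border_sym]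
  by (simp add: det_fun_moment_border_Suc_col)

lemma tau_sigma_identity:
  "tau s (Suc t) (Suc k) * tau s t k = tau s t (Suc k) * tau s (Suc t) k - (sigma s t k)^2"
  using desnanot_jacobi[of k k k "moment_border s t (Suc k)"]
  by (simp add: det_fun_moment_border det_fun_moment_border_lead det_fun_moment_border_skip
      det_fun_moment_border_skip_lead det_fun_moment_border_skip_col det_fun_moment_border_skip_row
      det_fun_mm_skip_skip_last power2_eq_square)

lemma tau_psi_identity:
  "tau s (Suc t) (Suc k) * tau (Suc s) t k = tau s t (Suc k) * tau (Suc s) (Suc t) k - (psi s t k)^2"
  using desnanot_jacobi[of 0 k 0 "moment_border s t (Suc k)"]
  by (simp add: det_fun_moment_border det_fun_moment_border_lead det_fun_moment_border_skip
      det_fun_moment_border_skip_lead)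
    (simp add: skip_0 det_fun_moment_border_Suc_col det_fun_moment_border_Suc_row
      det_fun_mm_Suc_Suc power2_eq_square)

lemma tau_xi_psi_sigma_identity:
  "tau s (Suc t) (Suc k) * xi s t k = tau s t (Suc k) * xi s (Suc t) k - psi s t k * sigma s t k"
  using desnanot_jacobi[of 0 k k "moment_border s t (Suc k)"]
  by (simp add: det_fun_moment_border det_fun_moment_border_lead det_fun_moment_border_skip
      det_fun_moment_border_skip_lead det_fun_moment_border_skip_col det_fun_mm_skip_last)
    (simp add: skip_0 det_fun_moment_border_Suc_row det_fun_mm_Suc_row)

theorem proposition3p6:
  fixes n s t :: nat
  assumes "n \<ge> 1"
  shows "tau s t (n+1) * tau (s+1) t (n-1) = tau s t n * tau (s+1) t n - (xi s t n)^2 \<and>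
    tau s (t+1) n * tau s t (n-1) = tau s t n * tau s (t+1) (n-1) - (sigma s t (n-1))^2 \<and>
    tau s (t+1) n * tau (s+1) t (n-1) = tau s t n * tau (s+1) (t+1) (n-1) - (psi s t (n-1))^2 \<and>
    tau s (t+1) n * xi s t (n-1) = tau s t n * xi s (t+1) (n-1) - psi s t (n-1) * sigma s t (n-1)"
proof -
  obtain k where "n = Suc k"
    using assms by (cases n) auto
  then show ?thesis
    using tau_xi_identity[of s t k] tau_sigma_identity[of s t k] tau_psi_identity[of s t k]
      tau_xi_psi_sigma_identity[of s t k]
    by simp
qed

end
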